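(* Let $f(z)=z+\sum_{n=2}^{\infty}a_nz^n\in\mathcal{S}^{*}_{\rho}$ and set $$\Omega_3:=a_2(a_4a_6-a_5^2)-a_3(a_3a_6-a_4a_5)+a_4(a_3a_5-a_4^2).$$ Then $$|\Omega_3|\le \frac{221394816+55296000\sqrt{6/599}+79626240\sqrt{6/77}+185794560\sqrt{21/251}+79626240\sqrt{6/23}+5971968\sqrt{10}}{597196800}\approx 0.606922 .$$
   Context: Let $\mathbb{D}=\{z\in\mathbb{C}:|z|<1\}$. For analytic $g_1,g_2$ on $\mathbb{D}$, $g_1\prec g_2$ means there is an analytic $w:\mathbb{D}\to\mathbb{D}$ with $w(0)=0$ such that $g_1=g_2\circ w$. Here $\sinh^{-1}$ denotes the principal branch of the inverse hyperbolic sine with $\sinh^{-1}(0)=0$, analytic on $\mathbb{D}$. The class $\mathcal{S}^{*}_{\rho}$ consists of all univalent analytic functions $f$ on $\mathbb{D}$ with $f(z)=z+\sum_{n\ge2}a_nz^n$ such that $\frac{zf'(z)}{f(z)}\prec 1+\sinh^{-1}(z)$. *)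

theory Defs
  imports "HOL-Complex_Analysis.Complex_Analysis"
begin

definition coef :: "(complex \<Rightarrow> complex) \<Rightarrow> nat \<Rightarrow> complex" where
  "coef f n = (deriv ^^ n) f 0 / of_nat (fact n)"

definition subordinate :: "(complex \<Rightarrow> complex) \<Rightarrow> (complex \<Rightarrow> complex) \<Rightarrow> bool" where
  "subordinate g1 g2 \<longleftrightarrow> (\<exists>w. w holomorphic_on ball 0 1 \<and> w ` ball 0 1 \<subseteq> ball 0 1 \<and> w 0 = 0
      \<and> (\<forall>z\<in>ball 0 1. g1 z = g2 (w z)))"

text \<open>The analytic function z f'(z)/f(z), with its removable singularity at 0 filled in
  by the value 1 (since f(0)=0, f'(0)=1).\<close>
definition zf'_over_f :: "(complex \<Rightarrow> complex) \<Rightarrow> complex \<Rightarrow> complex" where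
  "zf'_over_f f z = (if z = 0 then 1 else z * deriv f z / f z)"

text \<open>The class S^*_rho (arsinh on complex is the principal branch Ln(z + (z^2+1)^(1/2))).\<close>
definition S_rho :: "(complex \<Rightarrow> complex) set" where
  "S_rho = {f. f holomorphic_on ball 0 1 \<and> inj_on f (ball 0 1) \<and> f 0 = 0 \<and> deriv f 0 = 1
      \<and> subordinate (zf'_over_f f) (\<lambda>z. 1 + arsinh z)}"

end

theory Submission
  imports Defs
begin

text \<open>The Schwarz function \<open>w\<close> of the subordination \<open>z f'/f = 1 + arsinh \<circ> w\<close> has Taylor
  coefficients of modulus at most \<open>1\<close> by Cauchy's estimate. Comparing coefficients in
  \<open>z f' = f (1 + arsinh w)\<close>, where \<open>(arsinh w)' = w' / sqrt (1 + w\<^sup>2)\<close>, expresses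
  \<open>a\<^sub>2, \<dots>, a\<^sub>6\<close> as polynomials in \<open>w\<^sub>1, \<dots>, w\<^sub>5\<close>, and hence \<open>1166400 \<Omega>\<^sub>3\<close> as a polynomial
  with 13 monomials. The triangle inequality bounds it by \<open>700171\<close>, the sum of the absolute
  values of its coefficients, and \<open>700171 / 1166400 \<approx> 0.60028\<close> is already below the stated
  constant \<open>\<approx> 0.60692\<close>.\<close>

lemma Re_csqrt_pos:
  assumes "0 < Re v"
  shows "0 < Re (csqrt v)"
proof (rule ccontr)
  assume "\<not> 0 < Re (csqrt v)"
  then have "Re (csqrt v) = 0" using Re_csqrt[of v] by linarith
  then have "Re v = - (Im (csqrt v))\<^sup>2" using Re_power2[of "csqrt v"] by simp
  with assms show False by (smt (verit) zero_le_power2)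
qed

lemma Re_power2_add_one_pos:
  fixes u :: complex
  assumes "norm u < 1"
  shows "0 < Re (u\<^sup>2 + 1)"
proof -
  have "norm (u\<^sup>2) < 1" using assms by (simp add: norm_power power_less_one_iff)
  then show ?thesis using abs_Re_le_cmod[of "u\<^sup>2"] by simp
qed

lemma power2_add_one_notin_nonpos_Reals:
  fixes u :: complex
  assumes "norm u < 1"
  shows "u\<^sup>2 + 1 \<notin> \<real>\<^sub>\<le>\<^sub>0"
  using Re_power2_add_one_pos[OF assms] by (auto simp: complex_nonpos_Reals_iff)

lemma Re_csqrt_power2_add_one_pos:
  fixes u :: complex
  assumes "norm u < 1"
  shows "0 < Re (csqrt (u\<^sup>2 + 1))"
  using Re_csqrt_pos[OF Re_power2_add_one_pos[OF assms]] .

lemma add_csqrt_notin_nonpos_Reals: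
  fixes u :: complex
  assumes "norm u < 1"
  shows "u + csqrt (u\<^sup>2 + 1) \<notin> \<real>\<^sub>\<le>\<^sub>0"
proof
  define s where "s = csqrt (u\<^sup>2 + 1)"
  assume "u + csqrt (u\<^sup>2 + 1) \<in> \<real>\<^sub>\<le>\<^sub>0"
  then obtain r where r: "u + s = of_real r" "r \<le> 0"
    unfolding s_def by (rule nonpos_Reals_cases)
  \<comment> \<open>\<open>u + s\<close> and \<open>s - u\<close> are reciprocal, so both would be negative reals, hence so would \<open>2 s\<close>\<close>
  have reciprocal: "(u + s) * (s - u) = 1"
    by (simp add: s_def algebra_simps power2_eq_square[symmetric])
  then have "r \<noteq> 0" using r by auto
  with r reciprocal have "s - u = of_real (1 / r)"
    by (simp add: field_simps)
  with r have "2 * Re s = r + 1 / r" by (simp add: complex_eq_iff algebra_simps)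
  moreover have "0 < Re s" using Re_csqrt_power2_add_one_pos[OF assms] by (simp add: s_def)
  moreover have "r < 0" using r(2) \<open>r \<noteq> 0\<close> by simp
  then have "1 / r < 0" by simp
  ultimately show False using \<open>r < 0\<close> by linarith
qed

lemma has_field_derivative_arsinh:
  fixes u :: complex
  assumes "norm u < 1"
  shows "(arsinh has_field_derivative 1 / csqrt (u\<^sup>2 + 1)) (at u)"
proof -
  define s where "s = csqrt (u\<^sup>2 + 1)"
  have "0 < Re s" using Re_csqrt_power2_add_one_pos[OF assms] by (simp add: s_def)
  then have "s \<noteq> 0" by auto
  have "u + s \<noteq> 0" using add_csqrt_notin_nonpos_Reals[OF assms] by (auto simp: s_def)
  have "((\<lambda>x. csqrt (x\<^sup>2 + 1)) has_field_derivative inverse (2 * s) * (2 * u)) (at u)"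
    unfolding s_def
    by (rule DERIV_chain2[where g = "\<lambda>x. x\<^sup>2 + 1",
          OF has_field_derivative_csqrt[OF power2_add_one_notin_nonpos_Reals[OF assms]]])
      (auto intro!: derivative_eq_intros)
  then have "((\<lambda>x. Ln (x + csqrt (x\<^sup>2 + 1))) has_field_derivative
      inverse (u + s) * (1 + inverse (2 * s) * (2 * u))) (at u)"
    unfolding s_def
    by (intro DERIV_chain2[where g = "\<lambda>x. x + csqrt (x\<^sup>2 + 1)",
          OF has_field_derivative_Ln[OF add_csqrt_notin_nonpos_Reals[OF assms]]] DERIV_add DERIV_ident)
  moreover have "inverse (u + s) * (1 + inverse (2 * s) * (2 * u)) = 1 / s"
    using \<open>s \<noteq> 0\<close> \<open>u + s \<noteq> 0\<close> by (simp add: field_simps)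
  moreover have "arsinh = (\<lambda>x::complex. Ln (x + csqrt (x\<^sup>2 + 1)))"
    by (simp add: fun_eq_iff arsinh_def csqrt_conv_powr)
  ultimately show ?thesis by (simp add: s_def)
qed

lemma norm_coef_le_1_if_maps_disc:
  assumes hol: "w holomorphic_on ball 0 1" and maps: "w ` ball 0 1 \<subseteq> ball 0 1" and "0 < n"
  shows "norm (coef w n) \<le> 1"
proof -
  have Cauchy: "norm (coef w n) \<le> 1 / r ^ n" if "0 < r" "r < 1" for r :: real
  proof -
    have "norm ((deriv ^^ n) w 0) \<le> fact n * 1 / r ^ n"
    proof (rule Cauchy_higher_deriv_bound[where y = 0])
      show "w holomorphic_on ball 0 r" using that by (auto intro: holomorphic_on_subset[OF hol])
      show "continuous_on (cball 0 r) w"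
        using that by (auto intro: continuous_on_subset[OF holomorphic_on_imp_continuous_on[OF hol]])
    qed (use that maps \<open>0 < n\<close> in \<open>auto simp: image_subset_iff\<close>)
    then show ?thesis by (simp add: coef_def norm_divide field_simps)
  qed
  have "((\<lambda>r::real. 1 / r ^ n) \<longlongrightarrow> 1) (at_left 1)"
    by (auto intro!: tendsto_eq_intros)
  moreover have "eventually (\<lambda>r::real. norm (coef w n) \<le> 1 / r ^ n) (at_left 1)"
    using eventually_at_left_real[OF zero_less_one] by eventually_elim (use Cauchy in auto)
  ultimately show ?thesis by (rule tendsto_lowerbound) simp
qed

text \<open>Here \<open>S\<close> and \<open>Q\<close> stand for the expansions of \<open>sqrt (1 + w\<^sup>2)\<close> and \<open>arsinh w\<close>.\<close>

lemma fps_arsinh_coeffs: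
  fixes S Q W :: "'a::field_char_0 fps"
  assumes sq: "S * S = 1 + W * W" and deriv: "S * fps_deriv Q = fps_deriv W"
    and "fps_nth W 0 = 0" and "fps_nth S 0 = 1"
  shows "fps_nth Q 1 = fps_nth W 1" "fps_nth Q 2 = fps_nth W 2"
    "6 * fps_nth Q 3 = 6 * fps_nth W 3 - fps_nth W 1 ^ 3"
    "2 * fps_nth Q 4 = 2 * fps_nth W 4 - fps_nth W 1 ^ 2 * fps_nth W 2"
    "40 * fps_nth Q 5 = 40 * fps_nth W 5 - 20 * fps_nth W 1 * fps_nth W 2 ^ 2
      - 20 * fps_nth W 1 ^ 2 * fps_nth W 3 + 3 * fps_nth W 1 ^ 5"
proof -
  have sq_n: "fps_nth (S * S) n = fps_nth (1 + W * W) n"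
    and deriv_n: "fps_nth (S * fps_deriv Q) n = fps_nth (fps_deriv W) n" for n
    using sq deriv by simp_all
  note coeffs = fps_mult_nth eval_nat_numeral mult_ac
  have "fps_nth S 1 = 0" using sq_n[of 1] assms(3,4) by (simp add: coeffs)
  note init = assms(3,4) this
  have s2: "2 * fps_nth S 2 = fps_nth W 1 * fps_nth W 1"
    using sq_n[of 2] init by (simp add: coeffs)
  have s3: "fps_nth S 3 = fps_nth W 1 * fps_nth W 2"
    using sq_n[of 3] init by (simp add: coeffs)
  have s4: "2 * fps_nth S 4 + fps_nth S 2 * fps_nth S 2
      = 2 * fps_nth W 1 * fps_nth W 3 + fps_nth W 2 * fps_nth W 2"
    using sq_n[of 4] init by (simp add: coeffs)
  have q3: "3 * fps_nth Q 3 + fps_nth S 2 * fps_nth Q 1 = 3 * fps_nth W 3"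
    using deriv_n[of 2] init by (simp add: coeffs)
  have q4: "4 * fps_nth Q 4 + 2 * fps_nth S 2 * fps_nth Q 2 + fps_nth S 3 * fps_nth Q 1
      = 4 * fps_nth W 4"
    using deriv_n[of 3] init by (simp add: coeffs)
  have q5: "5 * fps_nth Q 5 + 3 * fps_nth S 2 * fps_nth Q 3 + 2 * fps_nth S 3 * fps_nth Q 2
      + fps_nth S 4 * fps_nth Q 1 = 5 * fps_nth W 5"
    using deriv_n[of 4] init by (simp add: coeffs)
  show q1: "fps_nth Q 1 = fps_nth W 1" using deriv_n[of 0] init by (simp add: coeffs)
  show q2: "fps_nth Q 2 = fps_nth W 2" using deriv_n[of 1] init by (simp add: coeffs)
  show "6 * fps_nth Q 3 = 6 * fps_nth W 3 - fps_nth W 1 ^ 3" using s2 q1 q3 by algebra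
  show "2 * fps_nth Q 4 = 2 * fps_nth W 4 - fps_nth W 1 ^ 2 * fps_nth W 2"
    using s2 s3 q1 q2 q4 by algebra
  show "40 * fps_nth Q 5 = 40 * fps_nth W 5 - 20 * fps_nth W 1 * fps_nth W 2 ^ 2
      - 20 * fps_nth W 1 ^ 2 * fps_nth W 3 + 3 * fps_nth W 1 ^ 5"
    using s2 s3 s4 q1 q2 q3 q5 by algebra
qed

lemma fps_starlike_coeffs:
  fixes A Q :: "'a::field_char_0 fps"
  assumes eq: "fps_X * fps_deriv A = A * (1 + Q)"
    and "fps_nth A 0 = 0" and "fps_nth A 1 = 1" and "fps_nth Q 0 = 0"
  shows "fps_nth A 2 = fps_nth Q 1"
    "2 * fps_nth A 3 = fps_nth Q 2 + fps_nth A 2 * fps_nth Q 1"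
    "3 * fps_nth A 4 = fps_nth Q 3 + fps_nth A 2 * fps_nth Q 2 + fps_nth A 3 * fps_nth Q 1"
    "4 * fps_nth A 5 = fps_nth Q 4 + fps_nth A 2 * fps_nth Q 3 + fps_nth A 3 * fps_nth Q 2
      + fps_nth A 4 * fps_nth Q 1"
    "5 * fps_nth A 6 = fps_nth Q 5 + fps_nth A 2 * fps_nth Q 4 + fps_nth A 3 * fps_nth Q 3
      + fps_nth A 4 * fps_nth Q 2 + fps_nth A 5 * fps_nth Q 1"
proof -
  have eq_n: "fps_nth (fps_X * fps_deriv A) n = fps_nth (A * (1 + Q)) n" for n
    using eq by simp
  from eq_n[of 2] eq_n[of 3] eq_n[of 4] eq_n[of 5] eq_n[of 6] assms(2-) show
    "fps_nth A 2 = fps_nth Q 1"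
    "2 * fps_nth A 3 = fps_nth Q 2 + fps_nth A 2 * fps_nth Q 1"
    "3 * fps_nth A 4 = fps_nth Q 3 + fps_nth A 2 * fps_nth Q 2 + fps_nth A 3 * fps_nth Q 1"
    "4 * fps_nth A 5 = fps_nth Q 4 + fps_nth A 2 * fps_nth Q 3 + fps_nth A 3 * fps_nth Q 2
      + fps_nth A 4 * fps_nth Q 1"
    "5 * fps_nth A 6 = fps_nth Q 5 + fps_nth A 2 * fps_nth Q 4 + fps_nth A 3 * fps_nth Q 3
      + fps_nth A 4 * fps_nth Q 2 + fps_nth A 5 * fps_nth Q 1"
    by (simp_all add: fps_mult_nth eval_nat_numeral algebra_simps)
qed

lemma fps_arsinh_starlike_coeffs:
  fixes A Q S W :: "'a::field_char_0 fps"
  assumes "S * S = 1 + W * W" "S * fps_deriv Q = fps_deriv W" "fps_X * fps_deriv A = A * (1 + Q)"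
    and "fps_nth W 0 = 0" "fps_nth S 0 = 1" "fps_nth Q 0 = 0" "fps_nth A 0 = 0" "fps_nth A 1 = 1"
  shows "fps_nth A 2 = fps_nth W 1"
    "2 * fps_nth A 3 = fps_nth W 2 + fps_nth W 1 ^ 2"
    "18 * fps_nth A 4 = 6 * fps_nth W 3 + 9 * fps_nth W 1 * fps_nth W 2 + 2 * fps_nth W 1 ^ 3"
    "72 * fps_nth A 5 = 18 * fps_nth W 4 + 9 * fps_nth W 2 ^ 2 + 24 * fps_nth W 1 * fps_nth W 3
      + 9 * fps_nth W 1 ^ 2 * fps_nth W 2 - fps_nth W 1 ^ 4"
    "1800 * fps_nth A 6 = 360 * fps_nth W 5 + 300 * fps_nth W 2 * fps_nth W 3
      + 450 * fps_nth W 1 * fps_nth W 4 + 45 * fps_nth W 1 * fps_nth W 2 ^ 2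
      + 120 * fps_nth W 1 ^ 2 * fps_nth W 3 - 125 * fps_nth W 1 ^ 3 * fps_nth W 2 - 8 * fps_nth W 1 ^ 5"
proof -
  note q = fps_arsinh_coeffs[OF assms(1,2,4,5)]
  note a = fps_starlike_coeffs[OF assms(3,7,8,6)]
  show a2: "fps_nth A 2 = fps_nth W 1" using q a by simp
  note a = a[unfolded q(1,2) a2]
  show a3: "2 * fps_nth A 3 = fps_nth W 2 + fps_nth W 1 ^ 2"
    using a(2) by (simp add: power2_eq_square)
  show a4: "18 * fps_nth A 4 = 6 * fps_nth W 3 + 9 * fps_nth W 1 * fps_nth W 2 + 2 * fps_nth W 1 ^ 3"
    using q(3) a(3) a3 by algebra
  show a5: "72 * fps_nth A 5 = 18 * fps_nth W 4 + 9 * fps_nth W 2 ^ 2 + 24 * fps_nth W 1 * fps_nth W 3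
      + 9 * fps_nth W 1 ^ 2 * fps_nth W 2 - fps_nth W 1 ^ 4"
    using q(3,4) a(4) a3 a4 by algebra
  show "1800 * fps_nth A 6 = 360 * fps_nth W 5 + 300 * fps_nth W 2 * fps_nth W 3
      + 450 * fps_nth W 1 * fps_nth W 4 + 45 * fps_nth W 1 * fps_nth W 2 ^ 2
      + 120 * fps_nth W 1 ^ 2 * fps_nth W 3 - 125 * fps_nth W 1 ^ 3 * fps_nth W 2 - 8 * fps_nth W 1 ^ 5"
    using q(3-5) a(5) a3 a4 a5 by algebra
qed

lemma has_fps_expansion_unique_on_ball:
  fixes f g :: "complex \<Rightarrow> complex"
  assumes "f has_fps_expansion F" "g has_fps_expansion G" "0 < r"
    and "\<And>z. z \<in> ball 0 r \<Longrightarrow> f z = g z"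
  shows "F = G"
proof -
  have "eventually (\<lambda>z. f z = g z) (nhds 0)"
    using eventually_nhds_in_open[of "ball 0 r" 0] assms(3,4) by (auto elim: eventually_mono)
  then have "g has_fps_expansion F" using assms(1) has_fps_expansion_cong by blast
  then show ?thesis using assms(2) by (rule fps_expansion_unique_complex)
qed

lemma coef_eq_fps_nth:
  assumes "f has_fps_expansion F"
  shows "coef f n = fps_nth F n"
  using fps_nth_fps_expansion[OF assms] by (simp add: coef_def)

lemma arsinh_comp_fps_equations:
  assumes hol: "w holomorphic_on ball 0 1" and maps: "w ` ball 0 1 \<subseteq> ball 0 1"
    and "w 0 = 0" and W: "w has_fps_expansion W"
  obtains S Q where "(\<lambda>z. arsinh (w z)) has_fps_expansion Q"
    "S * S = 1 + W * W" "S * fps_deriv Q = fps_deriv W" "fps_nth S 0 = 1" "fps_nth Q 0 = 0"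
proof
  define R where "R z = csqrt ((w z)\<^sup>2 + 1)" for z
  have norm_w: "norm (w z) < 1" if "z \<in> ball 0 1" for z
    using subsetD[OF maps imageI[OF that]] by simp
  have R_sq: "R z * R z = 1 + w z * w z" for z
    by (simp add: R_def power2_eq_square[symmetric] add.commute)
  have R_pos: "0 < Re (R z)" if "z \<in> ball 0 1" for z
    unfolding R_def using Re_csqrt_power2_add_one_pos[OF norm_w[OF that]] .
  have hol_R: "R holomorphic_on ball 0 1" unfolding R_def
    using power2_add_one_notin_nonpos_Reals[OF norm_w]
    by (intro holomorphic_on_csqrt' holomorphic_intros hol) auto
  then have R: "R has_fps_expansion fps_expansion R 0"
    using has_fps_expansion_fps_expansion[OF open_ball _ hol_R] by simp
  have arsinh_w: "((\<lambda>z. arsinh (w z)) has_field_derivative deriv w z / R z) (at z)"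
    if "z \<in> ball 0 1" for z
    using DERIV_chain2[OF has_field_derivative_arsinh[OF norm_w[OF that]]
        holomorphic_derivI[OF hol open_ball that]]
    by (simp add: R_def)
  then have hol_Q: "(\<lambda>z. arsinh (w z)) holomorphic_on ball 0 1"
    using holomorphic_on_open[OF open_ball] by blast
  show Q: "(\<lambda>z. arsinh (w z)) has_fps_expansion fps_expansion (\<lambda>z. arsinh (w z)) 0"
    using has_fps_expansion_fps_expansion[OF open_ball _ hol_Q] by simp
  show "fps_expansion R 0 * fps_expansion R 0 = 1 + W * W"
    using R_sq
    by (intro has_fps_expansion_unique_on_ball[of "\<lambda>z. R z * R z" _ "\<lambda>z. 1 + w z * w z" _ 1]
        has_fps_expansion_mult has_fps_expansion_add has_fps_expansion_1 R W) auto
  show "fps_expansion R 0 * fps_deriv (fps_expansion (\<lambda>z. arsinh (w z)) 0) = fps_deriv W"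
  proof (rule has_fps_expansion_unique_on_ball
      [of "\<lambda>z. R z * deriv (\<lambda>z. arsinh (w z)) z" _ "deriv w" _ 1])
    fix z :: complex assume "z \<in> ball 0 1"
    with arsinh_w[of z] R_pos[of z] show "R z * deriv (\<lambda>z. arsinh (w z)) z = deriv w z"
      by (auto simp: DERIV_imp_deriv)
  qed (auto intro!: has_fps_expansion_mult has_fps_expansion_deriv R Q W)
  show "fps_nth (fps_expansion R 0) 0 = 1" "fps_nth (fps_expansion (\<lambda>z. arsinh (w z)) 0) 0 = 0"
    by (simp_all add: fps_expansion_def R_def \<open>w 0 = 0\<close>)
qed

lemma S_rho_subordination_eq:
  assumes "f \<in> S_rho"
  obtains w where "w holomorphic_on ball 0 1" "w ` ball 0 1 \<subseteq> ball 0 1" "w 0 = 0"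
    "\<And>z. z \<in> ball 0 1 \<Longrightarrow> z * deriv f z = f z * (1 + arsinh (w z))"
proof -
  from assms have inj: "inj_on f (ball 0 1)" and "f 0 = 0"
    and "subordinate (zf'_over_f f) (\<lambda>z. 1 + arsinh z)"
    by (auto simp: S_rho_def)
  then obtain w where w: "w holomorphic_on ball 0 1" "w ` ball 0 1 \<subseteq> ball 0 1" "w 0 = 0"
    and sub: "\<And>z. z \<in> ball 0 1 \<Longrightarrow> zf'_over_f f z = 1 + arsinh (w z)"
    unfolding subordinate_def by blast
  have "z * deriv f z = f z * (1 + arsinh (w z))" if z: "z \<in> ball 0 1" for z
  proof (cases "z = 0")
    case False
    then have "f z \<noteq> 0" using inj z \<open>f 0 = 0\<close> by (metis centre_in_ball inj_onD zero_less_one)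
    with sub[OF z] False show ?thesis by (simp add: zf'_over_f_def field_simps)
  qed (simp add: \<open>f 0 = 0\<close>)
  with w that show ?thesis by blast
qed

lemma S_rho_coef_formulas:
  assumes "f \<in> S_rho"
  obtains c :: "nat \<Rightarrow> complex" where "\<And>k. 0 < k \<Longrightarrow> norm (c k) \<le> 1"
    "coef f 2 = c 1" "2 * coef f 3 = c 2 + c 1 ^ 2"
    "18 * coef f 4 = 6 * c 3 + 9 * c 1 * c 2 + 2 * c 1 ^ 3"
    "72 * coef f 5 = 18 * c 4 + 9 * c 2 ^ 2 + 24 * c 1 * c 3 + 9 * c 1 ^ 2 * c 2 - c 1 ^ 4"
    "1800 * coef f 6 = 360 * c 5 + 300 * c 2 * c 3 + 450 * c 1 * c 4 + 45 * c 1 * c 2 ^ 2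
       + 120 * c 1 ^ 2 * c 3 - 125 * c 1 ^ 3 * c 2 - 8 * c 1 ^ 5"
proof -
  from assms have hol_f: "f holomorphic_on ball 0 1" and "f 0 = 0" "deriv f 0 = 1"
    by (auto simp: S_rho_def)
  obtain w where hol_w: "w holomorphic_on ball 0 1" and maps: "w ` ball 0 1 \<subseteq> ball 0 1"
    and "w 0 = 0" and ode: "\<And>z. z \<in> ball 0 1 \<Longrightarrow> z * deriv f z = f z * (1 + arsinh (w z))"
    using S_rho_subordination_eq[OF assms] by blast
  define A where "A = fps_expansion f 0"
  define W where "W = fps_expansion w 0"
  have A: "f has_fps_expansion A" and W: "w has_fps_expansion W"
    unfolding A_def W_def
    by (auto intro!: has_fps_expansion_fps_expansion[OF open_ball] hol_f hol_w)
  obtain S Q where Q: "(\<lambda>z. arsinh (w z)) has_fps_expansion Q"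
    and SQ: "S * S = 1 + W * W" "S * fps_deriv Q = fps_deriv W" "fps_nth S 0 = 1" "fps_nth Q 0 = 0"
    using arsinh_comp_fps_equations[OF hol_w maps \<open>w 0 = 0\<close> W] by blast
  have E: "fps_X * fps_deriv A = A * (1 + Q)"
    by (rule has_fps_expansion_unique_on_ball
        [of "\<lambda>z. z * deriv f z" _ "\<lambda>z. f z * (1 + arsinh (w z))" _ 1])
      (auto simp: ode intro!: has_fps_expansion_fps_X has_fps_expansion_mult
        has_fps_expansion_add has_fps_expansion_deriv A Q)
  have init: "fps_nth W 0 = 0" "fps_nth A 0 = 0" "fps_nth A 1 = 1"
    by (simp_all add: A_def W_def fps_expansion_def \<open>w 0 = 0\<close> \<open>f 0 = 0\<close> \<open>deriv f 0 = 1\<close>)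
  note coeffs = fps_arsinh_starlike_coeffs[OF SQ(1,2) E init(1) SQ(3,4) init(2,3)]
  show ?thesis
  proof (rule that[of "coef w"])
    show "norm (coef w k) \<le> 1" if "0 < k" for k
      using norm_coef_le_1_if_maps_disc[OF hol_w maps that] .
  qed (use coeffs in \<open>simp_all add: coef_eq_fps_nth[OF A] coef_eq_fps_nth[OF W]\<close>)
qed

definition hankel3_schwarz_poly :: "'a::comm_ring_1 \<Rightarrow> 'a \<Rightarrow> 'a \<Rightarrow> 'a \<Rightarrow> 'a \<Rightarrow> 'a" where
  "hankel3_schwarz_poly w1 w2 w3 w4 w5 =
     97200 * w2 * w3 * w4 - 43200 * w3 ^ 3 - 58320 * w2 ^ 2 * w5
     - 72900 * w1 * w4 ^ 2 + 77760 * w1 * w3 * w5 + 47385 * w1 * w2 ^ 4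
     - 106920 * w1 ^ 2 * w2 ^ 2 * w3 - 17280 * w1 ^ 3 * w3 ^ 2 + 105300 * w1 ^ 3 * w2 * w4
     - 32400 * w1 ^ 4 * w5 - 16929 * w1 ^ 5 * w2 ^ 2 + 21672 * w1 ^ 6 * w3 - 2905 * w1 ^ 9"

lemma hankel3_eq_schwarz_poly:
  fixes a2 a3 a4 a5 a6 w1 w2 w3 w4 w5 :: "'a::field_char_0"
  assumes "a2 = w1" "2 * a3 = w2 + w1 ^ 2" "18 * a4 = 6 * w3 + 9 * w1 * w2 + 2 * w1 ^ 3"
    "72 * a5 = 18 * w4 + 9 * w2 ^ 2 + 24 * w1 * w3 + 9 * w1 ^ 2 * w2 - w1 ^ 4"
    "1800 * a6 = 360 * w5 + 300 * w2 * w3 + 450 * w1 * w4 + 45 * w1 * w2 ^ 2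
       + 120 * w1 ^ 2 * w3 - 125 * w1 ^ 3 * w2 - 8 * w1 ^ 5"
  shows "1166400 * (a2 * (a4 * a6 - a5 ^ 2) - a3 * (a3 * a6 - a4 * a5) + a4 * (a3 * a5 - a4 ^ 2))
    = hankel3_schwarz_poly w1 w2 w3 w4 w5"
proof -
  \<comment> \<open>\<open>1166400 = 18 \<cdot> 36 \<cdot> 1800\<close> clears all denominators of the coefficient formulas\<close>
  have "1166400 * (a2 * (a4 * a6 - a5 ^ 2) - a3 * (a3 * a6 - a4 * a5) + a4 * (a3 * a5 - a4 ^ 2))
      = 36 * a2 * (18 * a4) * (1800 * a6) - 225 * a2 * (72 * a5) ^ 2 - 162 * (2 * a3) ^ 2 * (1800 * a6)
        + 900 * (2 * a3) * (18 * a4) * (72 * a5) - 200 * (18 * a4) ^ 3"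
    by algebra
  also have "\<dots> = hankel3_schwarz_poly w1 w2 w3 w4 w5"
    unfolding assms hankel3_schwarz_poly_def by algebra
  finally show ?thesis .
qed

lemma norm_mult_le_1:
  fixes x y :: "'a::real_normed_algebra"
  shows "norm x \<le> 1 \<Longrightarrow> norm y \<le> 1 \<Longrightarrow> norm (x * y) \<le> 1"
  using norm_mult_ineq[of x y] mult_le_one[of "norm x" "norm y"] by simp

lemma norm_power_le_1:
  fixes x :: "'a::real_normed_algebra_1"
  shows "norm x \<le> 1 \<Longrightarrow> norm (x ^ n) \<le> 1"
  using norm_power_ineq[of x n] power_le_one[of "norm x" n] by simp

lemma norm_numeral_mult_le:
  fixes y :: "'a::real_normed_algebra_1"
  assumes "norm y \<le> 1"
  shows "norm (numeral k * y) \<le> numeral k"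
proof -
  have "norm (numeral k * y) \<le> numeral k * norm y" using norm_mult_ineq[of "numeral k" y] by simp
  also have "\<dots> \<le> numeral k" using assms by (simp add: mult_left_le)
  finally show ?thesis .
qed

lemma norm_diff_le_add:
  fixes x y :: "'a::real_normed_vector"
  shows "norm x \<le> a \<Longrightarrow> norm y \<le> b \<Longrightarrow> norm (x - y) \<le> a + b"
  using norm_triangle_ineq4[of x y] by linarith

lemma norm_hankel3_schwarz_poly_le:
  fixes w1 w2 w3 w4 w5 :: "'a::real_normed_field"
  assumes "norm w1 \<le> 1" "norm w2 \<le> 1" "norm w3 \<le> 1" "norm w4 \<le> 1" "norm w5 \<le> 1"
  shows "norm (hankel3_schwarz_poly w1 w2 w3 w4 w5) \<le> 700171"
proof -
  have "norm (hankel3_schwarz_poly w1 w2 w3 w4 w5) \<le> 97200 + 43200 + 58320 + 72900 + 77760 + 47385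
      + 106920 + 17280 + 105300 + 32400 + 16929 + 21672 + 2905"
    unfolding hankel3_schwarz_poly_def mult.assoc
    by (intro norm_add_rule_thm norm_diff_le_add norm_numeral_mult_le norm_mult_le_1
        norm_power_le_1 assms)
  then show ?thesis by simp
qed

theorem mainTheorem8:
  fixes f :: "complex \<Rightarrow> complex"
  assumes "f \<in> S_rho"
  shows "cmod (coef f 2 * (coef f 4 * coef f 6 - (coef f 5)^2)
              - coef f 3 * (coef f 3 * coef f 6 - coef f 4 * coef f 5)
              + coef f 4 * (coef f 3 * coef f 5 - (coef f 4)^2))
         \<le> (221394816 + 55296000 * sqrt (6/599) + 79626240 * sqrt (6/77)
             + 185794560 * sqrt (21/251) + 79626240 * sqrt (6/23) + 5971968 * sqrt 10) / 597196800"
    (is "cmod ?\<Omega> \<le> ?bound")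
proof -
  obtain c :: "nat \<Rightarrow> complex" where c_le: "\<And>k. 0 < k \<Longrightarrow> norm (c k) \<le> 1" and formulas:
    "coef f 2 = c 1" "2 * coef f 3 = c 2 + c 1 ^ 2"
    "18 * coef f 4 = 6 * c 3 + 9 * c 1 * c 2 + 2 * c 1 ^ 3"
    "72 * coef f 5 = 18 * c 4 + 9 * c 2 ^ 2 + 24 * c 1 * c 3 + 9 * c 1 ^ 2 * c 2 - c 1 ^ 4"
    "1800 * coef f 6 = 360 * c 5 + 300 * c 2 * c 3 + 450 * c 1 * c 4 + 45 * c 1 * c 2 ^ 2
       + 120 * c 1 ^ 2 * c 3 - 125 * c 1 ^ 3 * c 2 - 8 * c 1 ^ 5"
    using S_rho_coef_formulas[OF assms] by blast
  have "1166400 * cmod ?\<Omega> = cmod (hankel3_schwarz_poly (c 1) (c 2) (c 3) (c 4) (c 5))"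
    using hankel3_eq_schwarz_poly[OF formulas] by (metis norm_mult norm_numeral)
  also have "\<dots> \<le> 700171" by (intro norm_hankel3_schwarz_poly_le c_le) simp_all
  finally have "cmod ?\<Omega> \<le> 700171 / 1166400" by simp
  also have "\<dots> \<le> ?bound"
  proof -
    have "1/10 \<le> sqrt (6/599::real)" "279/1000 \<le> sqrt (6/77::real)" "289/1000 \<le> sqrt (21/251::real)"
      "51/100 \<le> sqrt (6/23::real)" "316/100 \<le> sqrt (10::real)"
      by (intro real_le_rsqrt; simp add: power2_eq_square)+
    then show ?thesis by (simp add: divide_simps)
  qed
  finally show ?thesis .
qed
end
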